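(* Let $H$ be a clutter, $T$ a minimal transversal of $H$, $S\subseteq V(H)$ and $x\in V(H)$. Then either (i) there exists a minimal transversal $T'\subseteq T\setminus\{x\}$ of $H\backslash x$ such that $T'\cap S=(T\setminus\{x\})\cap S$; or (ii) there exist a vertex $z\in S\setminus\{x\}$ and an edge $h\in E(H)$ such that $x\in h$, $h\cap T=\{z\}$, and $T\setminus\{z\}\in b(H\circ(h,x,z))$.
   Context: A hypergraph has a finite vertex set and a set of subsets (edges). A clutter is a hypergraph in which no edge is a proper subset of another; $cl(\cdot)$ keeps only the inclusion-wise minimal edges. A transversal of $H$ is a vertex set meeting every edge; $b(H)$ is the clutter of inclusion-wise minimal transversals. For $v\in V(H)$: $H\backslash v=(V(H)\setminus\{v\},\{h\in E(H):v\notin h\})$ and $H/v=cl(V(H)\setminus\{v\},\{h\setminus\{v\}:h\in E(H)\})$. For disjoint $D,C\subseteq V(H)$, $H[D;C]$ is the clutter obtained by deleting all vertices of $D$ and contracting all vertices of $C$ (the order does not matter). The join of clutters is $H\vee F=cl(V(H)\cup V(F),E(H)\cup E(F))$. For an edge $h\in E(H)$ and distinct $u,v\in h$, $H\circ(h,u,v)=H[\{u\};h\setminus\{u\}]\vee H[\{v\};h\setminus\{v\}]$. *)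

theory Defs
  imports Main
begin

type_synonym 'a hypergraph = "'a set \<times> 'a set set"

definition verts :: "'a hypergraph \<Rightarrow> 'a set" where
  "verts H = fst H"

definition edges :: "'a hypergraph \<Rightarrow> 'a set set" where
  "edges H = snd H"

definition hypergraph :: "'a hypergraph \<Rightarrow> bool" where
  "hypergraph H \<longleftrightarrow> finite (verts H) \<and> (\<forall>h\<in>edges H. h \<subseteq> verts H)"

definition clutter :: "'a hypergraph \<Rightarrow> bool" where
  "clutter H \<longleftrightarrow> hypergraph H \<and> (\<forall>g\<in>edges H. \<forall>h\<in>edges H. \<not> g \<subset> h)"

definition cl :: "'a hypergraph \<Rightarrow> 'a hypergraph" where
  "cl H = (verts H, {h\<in>edges H. \<forall>g\<in>edges H. \<not> g \<subset> h})"

definition transversal :: "'a hypergraph \<Rightarrow> 'a set \<Rightarrow> bool" where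
  "transversal H T \<longleftrightarrow> T \<subseteq> verts H \<and> (\<forall>h\<in>edges H. T \<inter> h \<noteq> {})"

definition blocker :: "'a hypergraph \<Rightarrow> 'a hypergraph" where
  "blocker H = (verts H, {T. transversal H T \<and> (\<forall>T'. T' \<subset> T \<longrightarrow> \<not> transversal H T')})"

definition del :: "'a hypergraph \<Rightarrow> 'a \<Rightarrow> 'a hypergraph" where
  "del H v = (verts H - {v}, {h\<in>edges H. v \<notin> h})"

definition contr :: "'a hypergraph \<Rightarrow> 'a \<Rightarrow> 'a hypergraph" where
  "contr H v = cl (verts H - {v}, (\<lambda>h. h - {v}) ` edges H)"

text \<open>H[D;C]: delete all vertices of D and contract all vertices of C (D, C disjoint).\<close>
definition minor :: "'a hypergraph \<Rightarrow> 'a set \<Rightarrow> 'a set \<Rightarrow> 'a hypergraph" where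
  "minor H D C = cl (verts H - (D \<union> C), (\<lambda>h. h - C) ` {h\<in>edges H. h \<inter> D = {}})"

definition join :: "'a hypergraph \<Rightarrow> 'a hypergraph \<Rightarrow> 'a hypergraph" where
  "join H F = cl (verts H \<union> verts F, edges H \<union> edges F)"

definition circ :: "'a hypergraph \<Rightarrow> 'a set \<Rightarrow> 'a \<Rightarrow> 'a \<Rightarrow> 'a hypergraph" where
  "circ H h u v = join (minor H {u} (h - {u})) (minor H {v} (h - {v}))"

end

theory Submission
  imports Defs
begin

text \<open>Shrink \<open>T \<setminus> {x}\<close>, a transversal of \<open>H\<setminus>x\<close>, to a transversal \<open>B\<close> of \<open>H\<setminus>x\<close> that keeps
  \<open>R = (T \<setminus> {x}) \<inter> S\<close> and from which no vertex outside \<open>R\<close> can be dropped. If \<open>B\<close> is a minimal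
  transversal we are in case (i). Otherwise some \<open>z \<in> R\<close> is redundant in \<open>B\<close>; its private edge
  \<open>h\<close> with \<open>h \<inter> T = {z}\<close> must contain \<open>x\<close>, since \<open>B \<setminus> {z}\<close> misses it. In \<open>H\<circ>(h,x,z)\<close> the
  edges are the sets \<open>e \<setminus> h\<close> for edges \<open>e\<close> avoiding \<open>x\<close> or \<open>z\<close>; \<open>T \<setminus> {z}\<close> meets those avoiding
  \<open>x\<close> because \<open>B \<setminus> {z}\<close> does, those avoiding \<open>z\<close> because \<open>T\<close> does, and minimality is
  inherited from the private edges of the other vertices of \<open>T\<close>.\<close>

lemma hypergraph_finite_edge:
  assumes "hypergraph G" "e \<in> edges G"
  shows "finite e"
  using assms by (meson finite_subset hypergraph_def)

lemma verts_cl [simp]: "verts (cl G) = verts G"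
  by (simp add: cl_def verts_def)

lemma edges_cl_subset: "edges (cl G) \<subseteq> edges G"
  by (auto simp: cl_def edges_def)

lemma cl_edge_below:
  assumes fin: "\<forall>e\<in>edges G. finite e" and e: "e \<in> edges G"
  shows "\<exists>f\<in>edges (cl G). f \<subseteq> e"
proof -
  obtain f where f: "f \<in> edges G" "f \<subseteq> e"
    and least: "\<And>g. g \<in> edges G \<Longrightarrow> g \<subseteq> e \<Longrightarrow> card f \<le> card g"
    using ex_has_least_nat[of "\<lambda>f. f \<in> edges G \<and> f \<subseteq> e" e card] e by blast
  have "\<not> g \<subset> f" if "g \<in> edges G" for g
  proof
    assume "g \<subset> f"
    then have "card g < card f" using f fin e by (meson finite_subset psubset_card_mono)
    with least[OF that] \<open>g \<subset> f\<close> f(2) show False by fastforce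
  qed
  with f show ?thesis by (auto simp: cl_def edges_def)
qed

lemma transversal_cl_iff:
  assumes "\<forall>e\<in>edges G. finite e"
  shows "transversal (cl G) A \<longleftrightarrow> transversal G A"
proof -
  have "(\<forall>f\<in>edges (cl G). A \<inter> f \<noteq> {}) \<longleftrightarrow> (\<forall>e\<in>edges G. A \<inter> e \<noteq> {})"
  proof
    assume meets: "\<forall>f\<in>edges (cl G). A \<inter> f \<noteq> {}"
    show "\<forall>e\<in>edges G. A \<inter> e \<noteq> {}"
    proof
      fix e assume "e \<in> edges G"
      then obtain f where "f \<in> edges (cl G)" "f \<subseteq> e"
        using cl_edge_below[OF assms] by blast
      with meets show "A \<inter> e \<noteq> {}" by blast
    qed
  qed (use edges_cl_subset in blast)
  then show ?thesis by (simp add: transversal_def)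
qed

lemma transversal_mono:
  assumes "transversal G A" "A \<subseteq> B" "B \<subseteq> verts G"
  shows "transversal G B"
  using assms unfolding transversal_def by blast

lemma verts_del [simp]: "verts (del G x) = verts G - {x}"
  by (simp add: del_def verts_def)

lemma edges_del [simp]: "edges (del G x) = {e \<in> edges G. x \<notin> e}"
  by (simp add: del_def edges_def)

lemma transversal_del:
  assumes "transversal G T"
  shows "transversal (del G x) (T - {x})"
  using assms by (auto simp: transversal_def)

lemma hypergraph_minor:
  assumes "hypergraph H"
  shows "hypergraph (minor H D C)"
  using assms by (auto simp: hypergraph_def minor_def cl_def verts_def edges_def)

lemma transversal_minor_iff:
  assumes "hypergraph H"
  shows "transversal (minor H D C) A \<longleftrightarrow>
    A \<subseteq> verts H - (D \<union> C) \<and> (\<forall>e\<in>edges H. e \<inter> D = {} \<longrightarrow> A \<inter> (e - C) \<noteq> {})"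
proof -
  have fin: "\<forall>e\<in>edges (verts H - (D \<union> C), (\<lambda>h. h - C) ` {h\<in>edges H. h \<inter> D = {}}). finite e"
    using hypergraph_finite_edge[OF assms] by (simp add: edges_def)
  then show ?thesis
    unfolding minor_def transversal_cl_iff[OF fin] by (auto simp: transversal_def verts_def edges_def)
qed

lemma transversal_join_iff:
  assumes "hypergraph H" "hypergraph F"
  shows "transversal (join H F) A \<longleftrightarrow>
    A \<subseteq> verts H \<union> verts F \<and> (\<forall>e\<in>edges H \<union> edges F. A \<inter> e \<noteq> {})"
proof -
  have "\<forall>e\<in>edges H \<union> edges F. finite e"
    using hypergraph_finite_edge assms by blast
  then have fin: "\<forall>e\<in>edges (verts H \<union> verts F, edges H \<union> edges F). finite e"
    by (simp add: edges_def)
  then show ?thesis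
    unfolding join_def transversal_cl_iff[OF fin] by (simp add: transversal_def verts_def edges_def)
qed

lemma transversal_circ_iff:
  assumes hg: "hypergraph H" and "x \<in> h" "z \<in> h"
  shows "transversal (circ H h x z) A \<longleftrightarrow>
    A \<subseteq> verts H - h \<and> (\<forall>e\<in>edges H. x \<notin> e \<or> z \<notin> e \<longrightarrow> A \<inter> (e - h) \<noteq> {})"
proof -
  let ?M = "\<lambda>v. minor H {v} (h - {v})"
  have verts_minor: "verts (?M v) = verts H - h" if "v \<in> h" for v
    unfolding minor_def verts_cl using that by (auto simp: verts_def)
  have transversal_minor: "transversal (?M v) A \<longleftrightarrow>
      A \<subseteq> verts H - h \<and> (\<forall>e\<in>edges H. v \<notin> e \<longrightarrow> A \<inter> (e - h) \<noteq> {})" if "v \<in> h" for v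
  proof -
    have "{v} \<union> (h - {v}) = h" using that by auto
    moreover have "e \<inter> {v} = {} \<longleftrightarrow> v \<notin> e" for e
      by auto
    moreover have "e - (h - {v}) = e - h" if "v \<notin> e" for e
      using that by auto
    ultimately show ?thesis
      unfolding transversal_minor_iff[OF hg] by simp
  qed
  have "transversal (circ H h x z) A \<longleftrightarrow> transversal (?M x) A \<and> transversal (?M z) A"
    unfolding circ_def transversal_join_iff[OF hypergraph_minor[OF hg] hypergraph_minor[OF hg]]
      transversal_def[of "?M x"] transversal_def[of "?M z"]
    using verts_minor assms(2,3) by auto
  then show ?thesis
    unfolding transversal_minor[OF assms(2)] transversal_minor[OF assms(3)] by blast
qed

lemma blocker_edge_iff:
  "T \<in> edges (blocker G) \<longleftrightarrow> transversal G T \<and> (\<forall>t\<in>T. \<not> transversal G (T - {t}))"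
proof -
  have "(\<forall>T'. T' \<subset> T \<longrightarrow> \<not> transversal G T') \<longleftrightarrow> (\<forall>t\<in>T. \<not> transversal G (T - {t}))"
    if "transversal G T"
  proof
    assume "\<forall>t\<in>T. \<not> transversal G (T - {t})"
    moreover have "transversal G (T - {t})" if "T' \<subset> T" "transversal G T'" "t \<in> T - T'" for T' t
    proof (rule transversal_mono[OF that(2)])
      show "T' \<subseteq> T - {t}" "T - {t} \<subseteq> verts G"
        using that(1,3) \<open>transversal G T\<close> by (auto simp: transversal_def)
    qed
    ultimately show "\<forall>T'. T' \<subset> T \<longrightarrow> \<not> transversal G T'" by blast
  qed blast
  then show ?thesis by (auto simp: blocker_def edges_def)
qed

lemma blocker_private_edge:
  assumes "T \<in> edges (blocker G)" "t \<in> T"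
  shows "\<exists>e\<in>edges G. e \<inter> T = {t}"
proof -
  have tr: "transversal G T" and "\<not> transversal G (T - {t})"
    using assms by (auto simp: blocker_edge_iff)
  then obtain e where e: "e \<in> edges G" "(T - {t}) \<inter> e = {}"
    by (auto simp: transversal_def)
  moreover have "T \<inter> e \<noteq> {}" using tr e(1) by (simp add: transversal_def)
  ultimately show ?thesis by blast
qed

lemma transversal_shrink_outside:
  assumes "finite B" "transversal G B" "R \<subseteq> B"
  obtains B' where "R \<subseteq> B'" "B' \<subseteq> B" "transversal G B'"
    "\<And>z. z \<in> B' - R \<Longrightarrow> \<not> transversal G (B' - {z})"
proof -
  define P where "P B' \<longleftrightarrow> R \<subseteq> B' \<and> B' \<subseteq> B \<and> transversal G B'" for B'
  obtain B' where PB': "P B'" and least: "\<And>C. P C \<Longrightarrow> card B' \<le> card C"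
    using ex_has_least_nat[of P B card] assms unfolding P_def by blast
  have "finite B'" using PB' \<open>finite B\<close> unfolding P_def by (meson finite_subset)
  have tight: "\<not> transversal G (B' - {z})" if z: "z \<in> B' - R" for z
  proof
    assume "transversal G (B' - {z})"
    with PB' z have "P (B' - {z})" unfolding P_def by blast
    then have "card B' \<le> card (B' - {z})" by (rule least)
    with card_Diff1_less[OF \<open>finite B'\<close>, of z] z show False by simp
  qed
  from PB' have "R \<subseteq> B'" "B' \<subseteq> B" "transversal G B'" unfolding P_def by auto
  then show ?thesis using tight by (rule that)
qed

lemma blocker_circ:
  assumes hg: "hypergraph H" and T: "T \<in> edges (blocker H)"
    and h: "h \<in> edges H" "x \<in> h" "h \<inter> T = {z}"
    and avoid_x: "\<And>e. e \<in> edges H \<Longrightarrow> x \<notin> e \<Longrightarrow> (T - {z}) \<inter> e \<noteq> {}"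
  shows "T - {z} \<in> edges (blocker (circ H h x z))"
proof -
  have zh: "z \<in> h" and zT: "z \<in> T" using h(3) by auto
  have trT: "transversal H T" using T by (simp add: blocker_edge_iff)
  have meet: "(T - {z}) \<inter> (e - h) = (T - {z}) \<inter> e" for e
    using h(3) by auto
  have "transversal (circ H h x z) (T - {z})"
    unfolding transversal_circ_iff[OF hg h(2) zh] meet
  proof (intro conjI ballI impI)
    show "T - {z} \<subseteq> verts H - h" using trT h(3) by (auto simp: transversal_def)
  next
    fix e assume e: "e \<in> edges H" "x \<notin> e \<or> z \<notin> e"
    show "(T - {z}) \<inter> e \<noteq> {}"
    proof (cases "x \<in> e")
      case True
      moreover have "T \<inter> e \<noteq> {}" using trT e(1) by (simp add: transversal_def)
      ultimately show ?thesis using e(2) by blast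
    qed (use avoid_x e(1) in blast)
  qed
  moreover have "\<not> transversal (circ H h x z) (T - {z} - {t})" if t: "t \<in> T - {z}" for t
  proof
    obtain e where e: "e \<in> edges H" "e \<inter> T = {t}"
      using blocker_private_edge[OF T, of t] t by blast
    assume "transversal (circ H h x z) (T - {z} - {t})"
    moreover have "z \<notin> e" using e(2) zT t by auto
    ultimately have "(T - {z} - {t}) \<inter> (e - h) \<noteq> {}"
      using e(1) unfolding transversal_circ_iff[OF hg h(2) zh] by blast
    with e(2) show False by auto
  qed
  ultimately show ?thesis by (simp add: blocker_edge_iff)
qed

lemma blocker_circ_private_edge:
  assumes hg: "hypergraph H" and T: "T \<in> edges (blocker H)" and "z \<in> T"
    and avoid_x: "\<And>e. e \<in> edges H \<Longrightarrow> x \<notin> e \<Longrightarrow> (T - {z}) \<inter> e \<noteq> {}"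
  shows "\<exists>h\<in>edges H. x \<in> h \<and> h \<inter> T = {z} \<and> T - {z} \<in> edges (blocker (circ H h x z))"
proof -
  obtain h where h: "h \<in> edges H" "h \<inter> T = {z}"
    using blocker_private_edge[OF T \<open>z \<in> T\<close>] by blast
  have "x \<in> h"
  proof (rule ccontr)
    assume "x \<notin> h"
    with avoid_x h show False by blast
  qed
  with h blocker_circ[OF hg T h(1) _ h(2) avoid_x] show ?thesis by blast
qed

theorem mainTheorem14:
  fixes H :: "'a hypergraph" and T S :: "'a set" and x :: 'a
  assumes "clutter H"
    and "T \<in> edges (blocker H)"
    and "S \<subseteq> verts H"
    and "x \<in> verts H"
  shows "(\<exists>T'. T' \<subseteq> T - {x} \<and> T' \<in> edges (blocker (del H x)) \<and> T' \<inter> S = (T - {x}) \<inter> S)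
       \<or> (\<exists>z \<in> S - {x}. \<exists>h \<in> edges H. x \<in> h \<and> h \<inter> T = {z}
             \<and> T - {z} \<in> edges (blocker (circ H h x z)))"
proof -
  have hg: "hypergraph H" using assms(1) by (simp add: clutter_def)
  have trT: "transversal H T" using assms(2) by (simp add: blocker_edge_iff)
  have fin: "finite (T - {x})"
    using trT hg by (meson finite_Diff finite_subset hypergraph_def transversal_def)
  obtain B where RB: "(T - {x}) \<inter> S \<subseteq> B" and BT: "B \<subseteq> T - {x}"
    and trB: "transversal (del H x) B"
    and tight: "\<And>z. z \<in> B - (T - {x}) \<inter> S \<Longrightarrow> \<not> transversal (del H x) (B - {z})"
    using transversal_shrink_outside[OF fin transversal_del[OF trT] Int_lower1[of _ S]] by blast
  show ?thesis
  proof (cases "B \<in> edges (blocker (del H x))")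
    case True
    with RB BT show ?thesis by (intro disjI1) blast
  next
    case False
    then obtain z where "z \<in> B" and trBz: "transversal (del H x) (B - {z})"
      using trB by (auto simp: blocker_edge_iff)
    with tight have "z \<in> (T - {x}) \<inter> S" by blast
    then have zS: "z \<in> S - {x}" and zT: "z \<in> T" by auto
    have avoid_x: "(T - {z}) \<inter> e \<noteq> {}" if "e \<in> edges H" "x \<notin> e" for e
    proof -
      have "(B - {z}) \<inter> e \<noteq> {}" using trBz that by (simp add: transversal_def)
      with BT show ?thesis by blast
    qed
    show ?thesis
      by (rule disjI2, rule bexI[OF _ zS], rule blocker_circ_private_edge[OF hg assms(2) zT avoid_x])
  qed
qed

end
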